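(* Let $(\Psi_d)_d$ be a constraint structure that is both a meet and a lift constraint structure, let $(\le,\wedge,P)$ be a decent triple on it, and let $(R^d)_d$ be a constraint-refining predicate that relates to a constraint-producing predicate $(\models^d)_d$ (axioms A1, A2 below). If $\sigma\to\vdash^{d}\Gamma\to\sigma'$ is derivable in SDI, then there exists $\sigma''\in\Psi_d$ such that $\sigma'\simeq\sigma\wedge\sigma''$, $P(\sigma\wedge\sigma'')$, and $\vdash^{d}\Gamma\to\sigma''$ is derivable in DI.
   Context: Formulas are first-order formulas in negation normal form, built from literals using $\wedge,\vee,\forall,\exists$. Eigenvariables (written $\bar x$) and meta-variables (written $X$) are two disjoint infinite supplies of variables. Domains: there is an initial domain $d_0$; for a domain $d$ and an eigenvariable $\bar x$ (resp. meta-variable $X$) not declared in $d$, $d;\bar x$ (resp. $d;X$) is a domain declaring additionally $\bar x$ (resp. $X$); all domains arise this way. A formula of domain $d$ is one whose free variables are eigenvariables or meta-variables declared in $d$; a context of domain $d$ is a finite multiset of formulas of domain $d$; $\Gamma_{lit}$ is the set of literals that are elements of $\Gamma$. A constraint structure consists of a set $\Psi_d$ for each domain $d$, with $\Psi_{d;\bar x}=\Psi_d$, and projection maps $\Psi_{d;X}\to\Psi_d$, $\sigma\mapsto\sigma_\downarrow$; a meet constraint structure additionally has a binary operation $\wedge$ on each $\Psi_d$; a lift constraint structure additionally has maps $\Psi_d\to\Psi_{d;X}$, $\sigma\mapsto\sigma^\uparrow$. A triple $(\le,\wedge,P)$, where $\le$ is a family of preorders on the $\Psi_d$, $\wedge$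 the meet operations, and $P$ a family of predicates on the $\Psi_d$, is decent if, writing $\simeq$ for the equivalence relation generated by $\le$: (D1) for all $\sigma,\sigma'\in\Psi_d$, $\sigma\wedge\sigma'$ is a greatest lower bound of $\sigma,\sigma'$ for $\le$; (D2) for all $\sigma\in\Psi_d$ and $\sigma',\sigma''\in\Psi_{d;X}$, $\sigma''\simeq\sigma^\uparrow\wedge\sigma'$ implies $\sigma''_\downarrow\simeq\sigma\wedge\sigma'_\downarrow$; (P1) for all $\sigma\in\Psi_{d;X}$, $P(\sigma)\iff P(\sigma_\downarrow)$; (P2) for all $\sigma,\sigma'\in\Psi_d$, $P(\sigma)$ and $\sigma\le\sigma'$ imply $P(\sigma')$. A constraint-producing predicate is a family of relations $\mathcal A\models^d\sigma$ between sets $\mathcal A$ of literals of domain $d$ and $\sigma\in\Psi_d$. A constraint-refining predicate is a family of relations $R^d(\sigma,\mathcal A,\sigma')$ between sets $\mathcal A$ of literals of domain $d$ and pairs $\sigma,\sigma'\in\Psi_d$. It relates to $(\models^d)_d$ if for all $d$, all sets $\mathcal A$ of literals of domain $d$ and all $\sigma\in\Psi_d$: (A1) for all $\sigma'\in\Psi_d$, $R^d(\sigma,\mathcal A,\sigma')$ implies there is $\sigma''\in\Psi_d$ with $\sigma'\simeq\sigma\wedge\sigma''$, $P(\sigma\wedge\sigma'')$ and $\mathcal A\models^d\sigma''$; (A2) for all $\sigma'\in\Psi_d$, if $P(\sigma\wedge\sigma')$ and $\mathcal A\models^d\sigma'$ then there is $\sigma''\in\Psi_d$ with $\sigma''\simeq\sigma\wedge\sigma'$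 and $R^d(\sigma,\mathcal A,\sigma'')$. System DI derives $\vdash^d\Gamma\to\sigma$ ($\Gamma$, $\sigma$ of domain $d$) by: $\vdash^d\Gamma\to\sigma$ if $\Gamma_{lit}\models^d\sigma$; from $\vdash^d\Gamma,A\to\sigma$ and $\vdash^d\Gamma,B\to\sigma'$ infer $\vdash^d\Gamma,A\wedge B\to\sigma\wedge\sigma'$; from $\vdash^d\Gamma,A,B\to\sigma$ infer $\vdash^d\Gamma,A\vee B\to\sigma$; from $\vdash^{d;X}\Gamma,A[x:=X],\exists xA\to\sigma$ ($X$ fresh meta-variable) infer $\vdash^d\Gamma,\exists xA\to\sigma_\downarrow$; from $\vdash^{d;\bar x}\Gamma,A[x:=\bar x]\to\sigma$ ($\bar x$ fresh eigenvariable) infer $\vdash^d\Gamma,\forall xA\to\sigma$. System SDI derives $\sigma\to\vdash^d\Gamma\to\sigma'$ ($\Gamma,\sigma,\sigma'$ of domain $d$) by: $\sigma\to\vdash^d\Gamma\to\sigma'$ if $R^d(\sigma,\Gamma_{lit},\sigma')$; from $\sigma\to\vdash^d\Gamma,A,B\to\sigma'$ infer $\sigma\to\vdash^d\Gamma,A\vee B\to\sigma'$; for $i\in\{0,1\}$, from $\sigma\to\vdash^d\Gamma,A_i\to\sigma''$ and $\sigma''\to\vdash^d\Gamma,A_{1-i}\to\sigma'$ infer $\sigma\to\vdash^d\Gamma,A_0\wedge A_1\to\sigma'$; from $\sigma^\uparrow\to\vdash^{d;X}\Gamma,A[x:=X],\exists xA\to\sigma'$ ($X$ fresh meta-variable)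 infer $\sigma\to\vdash^d\Gamma,\exists xA\to\sigma'_\downarrow$; from $\sigma\to\vdash^{d;\bar x}\Gamma,A[x:=\bar x]\to\sigma'$ ($\bar x$ fresh eigenvariable) infer $\sigma\to\vdash^d\Gamma,\forall xA\to\sigma'$. *)

theory Defs
  imports Main "HOL-Library.Multiset"
begin

datatype var = Bnd nat | Eig nat | Met nat

datatype 'f trm = Var var | Fn 'f "'f trm list"

text \<open>Formulas in NNF: a literal is a (possibly negated) atom; the boolean is the polarity.
  Forall x A / Exists x A bind the bound variable Bnd x in A.\<close>
datatype ('f, 'p) fm =
    Lit bool 'p "'f trm list"
  | Conj "('f, 'p) fm" "('f, 'p) fm"
  | Disj "('f, 'p) fm" "('f, 'p) fm"
  | Forall nat "('f, 'p) fm"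
  | Exists nat "('f, 'p) fm"

fun is_lit :: "('f, 'p) fm \<Rightarrow> bool" where
  "is_lit (Lit _ _ _) = True"
| "is_lit _ = False"

fun fv_trm :: "'f trm \<Rightarrow> var set" where
  "fv_trm (Var v) = {v}"
| "fv_trm (Fn f ts) = (\<Union>t\<in>set ts. fv_trm t)"

fun fv_fm :: "('f, 'p) fm \<Rightarrow> var set" where
  "fv_fm (Lit b p ts) = (\<Union>t\<in>set ts. fv_trm t)"
| "fv_fm (Conj A B) = fv_fm A \<union> fv_fm B"
| "fv_fm (Disj A B) = fv_fm A \<union> fv_fm B"
| "fv_fm (Forall x A) = fv_fm A - {Bnd x}"
| "fv_fm (Exists x A) = fv_fm A - {Bnd x}"

text \<open>Substitution of a term for the (free occurrences of the) bound variable x.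
  We only substitute eigenvariables / meta-variables, so no capture can occur.\<close>
fun subst_trm :: "nat \<Rightarrow> 'f trm \<Rightarrow> 'f trm \<Rightarrow> 'f trm" where
  "subst_trm x s (Var v) = (if v = Bnd x then s else Var v)"
| "subst_trm x s (Fn f ts) = Fn f (map (subst_trm x s) ts)"

fun subst :: "nat \<Rightarrow> 'f trm \<Rightarrow> ('f, 'p) fm \<Rightarrow> ('f, 'p) fm" where
  "subst x s (Lit b p ts) = Lit b p (map (subst_trm x s) ts)"
| "subst x s (Conj A B) = Conj (subst x s A) (subst x s B)"
| "subst x s (Disj A B) = Disj (subst x s A) (subst x s B)"
| "subst x s (Forall y A) = (if y = x then Forall y A else Forall y (subst x s A))"
| "subst x s (Exists y A) = (if y = x then Exists y A else Exists y (subst x s A))"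

text \<open>A domain is the list
  of declarations made on top of the initial domain d0 = []; the domain d;v is v # d.\<close>
datatype decl = DE nat | DM nat

type_synonym domain = "decl list"

definition d0 :: domain where "d0 = []"

definition is_domain :: "domain \<Rightarrow> bool" where
  "is_domain d \<longleftrightarrow> distinct d"

definition declared :: "domain \<Rightarrow> var \<Rightarrow> bool" where
  "declared d v \<longleftrightarrow> (\<exists>n. v = Eig n \<and> DE n \<in> set d) \<or> (\<exists>n. v = Met n \<and> DM n \<in> set d)"

definition fm_of :: "domain \<Rightarrow> ('f, 'p) fm \<Rightarrow> bool" where
  "fm_of d A \<longleftrightarrow> (\<forall>v\<in>fv_fm A. declared d v)"

definition ctx_of :: "domain \<Rightarrow> ('f, 'p) fm multiset \<Rightarrow> bool" where
  "ctx_of d \<Gamma> \<longleftrightarrow> (\<forall>A\<in>#\<Gamma>. fm_of d A)"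

definition lits_of :: "domain \<Rightarrow> ('f, 'p) fm set \<Rightarrow> bool" where
  "lits_of d \<A> \<longleftrightarrow> (\<forall>A\<in>\<A>. is_lit A \<and> fm_of d A)"

definition ctx_lit :: "('f, 'p) fm multiset \<Rightarrow> ('f, 'p) fm set" where
  "ctx_lit \<Gamma> = {A \<in> set_mset \<Gamma>. is_lit A}"

text \<open>Constraints live in a carrier type 'c; \<Psi> d is the set of constraints of domain d.
  proj d X : \<Psi>(d;X) \<rightarrow> \<Psi> d  (\<sigma> \<mapsto> \<sigma>\<down>),  lift d X : \<Psi> d \<rightarrow> \<Psi>(d;X)  (\<sigma> \<mapsto> \<sigma>\<up>),
  meet d : binary operation on \<Psi> d.\<close>
definition constraint_structure ::
  "(domain \<Rightarrow> 'c set) \<Rightarrow> (domain \<Rightarrow> nat \<Rightarrow> 'c \<Rightarrow> 'c) \<Rightarrow> bool" where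
  "constraint_structure \<Psi> proj \<longleftrightarrow>
     (\<forall>d x. is_domain d \<and> DE x \<notin> set d \<longrightarrow> \<Psi> (DE x # d) = \<Psi> d) \<and>
     (\<forall>d X. is_domain d \<and> DM X \<notin> set d \<longrightarrow> (\<forall>\<sigma>\<in>\<Psi> (DM X # d). proj d X \<sigma> \<in> \<Psi> d))"

text \<open>Since \<Psi>(d;x) is the same set as \<Psi> d, the operation on it is the same one.\<close>
definition meet_structure ::
  "(domain \<Rightarrow> 'c set) \<Rightarrow> (domain \<Rightarrow> 'c \<Rightarrow> 'c \<Rightarrow> 'c) \<Rightarrow> bool" where
  "meet_structure \<Psi> meet \<longleftrightarrow>
     (\<forall>d. is_domain d \<longrightarrow> (\<forall>\<sigma>\<in>\<Psi> d. \<forall>\<sigma>'\<in>\<Psi> d. meet d \<sigma> \<sigma>' \<in> \<Psi> d)) \<and>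
     (\<forall>d x. is_domain d \<and> DE x \<notin> set d \<longrightarrow>
        (\<forall>\<sigma>\<in>\<Psi> d. \<forall>\<sigma>'\<in>\<Psi> d. meet (DE x # d) \<sigma> \<sigma>' = meet d \<sigma> \<sigma>'))"

definition lift_structure ::
  "(domain \<Rightarrow> 'c set) \<Rightarrow> (domain \<Rightarrow> nat \<Rightarrow> 'c \<Rightarrow> 'c) \<Rightarrow> bool" where
  "lift_structure \<Psi> lift \<longleftrightarrow>
     (\<forall>d X. is_domain d \<and> DM X \<notin> set d \<longrightarrow> (\<forall>\<sigma>\<in>\<Psi> d. lift d X \<sigma> \<in> \<Psi> (DM X # d)))"

definition simeq :: "(domain \<Rightarrow> 'c \<Rightarrow> 'c \<Rightarrow> bool) \<Rightarrow> domain \<Rightarrow> 'c \<Rightarrow> 'c \<Rightarrow> bool" where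
  "simeq le d \<sigma> \<sigma>' \<longleftrightarrow> le d \<sigma> \<sigma>' \<and> le d \<sigma>' \<sigma>"

definition decent ::
  "(domain \<Rightarrow> 'c set) \<Rightarrow> (domain \<Rightarrow> nat \<Rightarrow> 'c \<Rightarrow> 'c) \<Rightarrow> (domain \<Rightarrow> nat \<Rightarrow> 'c \<Rightarrow> 'c)
   \<Rightarrow> (domain \<Rightarrow> 'c \<Rightarrow> 'c \<Rightarrow> bool) \<Rightarrow> (domain \<Rightarrow> 'c \<Rightarrow> 'c \<Rightarrow> 'c) \<Rightarrow> (domain \<Rightarrow> 'c \<Rightarrow> bool) \<Rightarrow> bool" where
  "decent \<Psi> proj lift le meet P \<longleftrightarrow>
     \<comment> \<open>le is a preorder on each \<Psi> d\<close>
     (\<forall>d. is_domain d \<longrightarrow> (\<forall>\<sigma>\<in>\<Psi> d. le d \<sigma> \<sigma>) \<and>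
        (\<forall>\<sigma>\<in>\<Psi> d. \<forall>\<sigma>'\<in>\<Psi> d. \<forall>\<sigma>''\<in>\<Psi> d. le d \<sigma> \<sigma>' \<and> le d \<sigma>' \<sigma>'' \<longrightarrow> le d \<sigma> \<sigma>'')) \<and>
     \<comment> \<open>\<Psi>(d;x) = \<Psi> d carries the same preorder and predicate\<close>
     (\<forall>d x. is_domain d \<and> DE x \<notin> set d \<longrightarrow>
        (\<forall>\<sigma>\<in>\<Psi> d. \<forall>\<sigma>'\<in>\<Psi> d. le (DE x # d) \<sigma> \<sigma>' = le d \<sigma> \<sigma>') \<and>
        (\<forall>\<sigma>\<in>\<Psi> d. P (DE x # d) \<sigma> = P d \<sigma>)) \<and>
     \<comment> \<open>D1\<close>
     (\<forall>d. is_domain d \<longrightarrow> (\<forall>\<sigma>\<in>\<Psi> d. \<forall>\<sigma>'\<in>\<Psi> d.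
        le d (meet d \<sigma> \<sigma>') \<sigma> \<and> le d (meet d \<sigma> \<sigma>') \<sigma>' \<and>
        (\<forall>\<tau>\<in>\<Psi> d. le d \<tau> \<sigma> \<and> le d \<tau> \<sigma>' \<longrightarrow> le d \<tau> (meet d \<sigma> \<sigma>')))) \<and>
     \<comment> \<open>D2\<close>
     (\<forall>d X. is_domain d \<and> DM X \<notin> set d \<longrightarrow>
        (\<forall>\<sigma>\<in>\<Psi> d. \<forall>\<sigma>'\<in>\<Psi> (DM X # d). \<forall>\<sigma>''\<in>\<Psi> (DM X # d).
          simeq le (DM X # d) \<sigma>'' (meet (DM X # d) (lift d X \<sigma>) \<sigma>') \<longrightarrow>
          simeq le d (proj d X \<sigma>'') (meet d \<sigma> (proj d X \<sigma>')))) \<and>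
     \<comment> \<open>P1\<close>
     (\<forall>d X. is_domain d \<and> DM X \<notin> set d \<longrightarrow>
        (\<forall>\<sigma>\<in>\<Psi> (DM X # d). P (DM X # d) \<sigma> \<longleftrightarrow> P d (proj d X \<sigma>))) \<and>
     \<comment> \<open>P2\<close>
     (\<forall>d. is_domain d \<longrightarrow> (\<forall>\<sigma>\<in>\<Psi> d. \<forall>\<sigma>'\<in>\<Psi> d. P d \<sigma> \<and> le d \<sigma> \<sigma>' \<longrightarrow> P d \<sigma>'))"

text \<open>Constraint-producing predicate: models d \<A> \<sigma>  stands for  \<A> \<Turnstile>^d \<sigma>.
  Constraint-refining predicate: R d \<sigma> \<A> \<sigma>'  stands for  R^d(\<sigma>, \<A>, \<sigma>').\<close>
definition relates ::
  "(domain \<Rightarrow> 'c set) \<Rightarrow> (domain \<Rightarrow> 'c \<Rightarrow> 'c \<Rightarrow> bool) \<Rightarrow> (domain \<Rightarrow> 'c \<Rightarrow> 'c \<Rightarrow> 'c)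
   \<Rightarrow> (domain \<Rightarrow> 'c \<Rightarrow> bool) \<Rightarrow> (domain \<Rightarrow> ('f, 'p) fm set \<Rightarrow> 'c \<Rightarrow> bool)
   \<Rightarrow> (domain \<Rightarrow> 'c \<Rightarrow> ('f, 'p) fm set \<Rightarrow> 'c \<Rightarrow> bool) \<Rightarrow> bool" where
  "relates \<Psi> le meet P models R \<longleftrightarrow>
     (\<forall>d \<A>. is_domain d \<and> lits_of d \<A> \<longrightarrow> (\<forall>\<sigma>\<in>\<Psi> d.
        \<comment> \<open>A1\<close>
        (\<forall>\<sigma>'\<in>\<Psi> d. R d \<sigma> \<A> \<sigma>' \<longrightarrow>
           (\<exists>\<sigma>''\<in>\<Psi> d. simeq le d \<sigma>' (meet d \<sigma> \<sigma>'') \<and> P d (meet d \<sigma> \<sigma>'') \<and> models d \<A> \<sigma>'')) \<and>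
        \<comment> \<open>A2\<close>
        (\<forall>\<sigma>'\<in>\<Psi> d. P d (meet d \<sigma> \<sigma>') \<and> models d \<A> \<sigma>' \<longrightarrow>
           (\<exists>\<sigma>''\<in>\<Psi> d. simeq le d \<sigma>'' (meet d \<sigma> \<sigma>') \<and> R d \<sigma> \<A> \<sigma>''))))"

text \<open>DI \<Psi> models meet proj d \<Gamma> \<sigma>  stands for  \<turnstile>^d \<Gamma> \<rightarrow> \<sigma>.\<close>
inductive DI ::
  "(domain \<Rightarrow> 'c set) \<Rightarrow> (domain \<Rightarrow> ('f, 'p) fm set \<Rightarrow> 'c \<Rightarrow> bool) \<Rightarrow> (domain \<Rightarrow> 'c \<Rightarrow> 'c \<Rightarrow> 'c)
   \<Rightarrow> (domain \<Rightarrow> nat \<Rightarrow> 'c \<Rightarrow> 'c) \<Rightarrow> domain \<Rightarrow> ('f, 'p) fm multiset \<Rightarrow> 'c \<Rightarrow> bool"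
  for \<Psi> models meet proj where
  DI_ax: "\<lbrakk>is_domain d; ctx_of d \<Gamma>; \<sigma> \<in> \<Psi> d; models d (ctx_lit \<Gamma>) \<sigma>\<rbrakk>
          \<Longrightarrow> DI \<Psi> models meet proj d \<Gamma> \<sigma>"
| DI_conj: "\<lbrakk>DI \<Psi> models meet proj d (\<Gamma> + {#A#}) \<sigma>; DI \<Psi> models meet proj d (\<Gamma> + {#B#}) \<sigma>'\<rbrakk>
          \<Longrightarrow> DI \<Psi> models meet proj d (\<Gamma> + {#Conj A B#}) (meet d \<sigma> \<sigma>')"
| DI_disj: "DI \<Psi> models meet proj d (\<Gamma> + {#A, B#}) \<sigma>
          \<Longrightarrow> DI \<Psi> models meet proj d (\<Gamma> + {#Disj A B#}) \<sigma>"
| DI_ex: "\<lbrakk>is_domain d; DM X \<notin> set d; ctx_of d (\<Gamma> + {#Exists x A#});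
           DI \<Psi> models meet proj (DM X # d) (\<Gamma> + {#subst x (Var (Met X)) A, Exists x A#}) \<sigma>\<rbrakk>
          \<Longrightarrow> DI \<Psi> models meet proj d (\<Gamma> + {#Exists x A#}) (proj d X \<sigma>)"
| DI_all: "\<lbrakk>is_domain d; DE y \<notin> set d; ctx_of d (\<Gamma> + {#Forall x A#});
           DI \<Psi> models meet proj (DE y # d) (\<Gamma> + {#subst x (Var (Eig y)) A#}) \<sigma>\<rbrakk>
          \<Longrightarrow> DI \<Psi> models meet proj d (\<Gamma> + {#Forall x A#}) \<sigma>"

text \<open>SDI \<Psi> R proj lift d \<sigma> \<Gamma> \<sigma>'  stands for  \<sigma> \<rightarrow> \<turnstile>^d \<Gamma> \<rightarrow> \<sigma>'.\<close>
inductive SDI ::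
  "(domain \<Rightarrow> 'c set) \<Rightarrow> (domain \<Rightarrow> 'c \<Rightarrow> ('f, 'p) fm set \<Rightarrow> 'c \<Rightarrow> bool)
   \<Rightarrow> (domain \<Rightarrow> nat \<Rightarrow> 'c \<Rightarrow> 'c) \<Rightarrow> (domain \<Rightarrow> nat \<Rightarrow> 'c \<Rightarrow> 'c)
   \<Rightarrow> domain \<Rightarrow> 'c \<Rightarrow> ('f, 'p) fm multiset \<Rightarrow> 'c \<Rightarrow> bool"
  for \<Psi> R proj lift where
  SDI_ax: "\<lbrakk>is_domain d; ctx_of d \<Gamma>; \<sigma> \<in> \<Psi> d; \<sigma>' \<in> \<Psi> d; R d \<sigma> (ctx_lit \<Gamma>) \<sigma>'\<rbrakk>
          \<Longrightarrow> SDI \<Psi> R proj lift d \<sigma> \<Gamma> \<sigma>'"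
| SDI_disj: "SDI \<Psi> R proj lift d \<sigma> (\<Gamma> + {#A, B#}) \<sigma>'
          \<Longrightarrow> SDI \<Psi> R proj lift d \<sigma> (\<Gamma> + {#Disj A B#}) \<sigma>'"
| SDI_conj1: "\<lbrakk>SDI \<Psi> R proj lift d \<sigma> (\<Gamma> + {#A#}) \<sigma>''; SDI \<Psi> R proj lift d \<sigma>'' (\<Gamma> + {#B#}) \<sigma>'\<rbrakk>
          \<Longrightarrow> SDI \<Psi> R proj lift d \<sigma> (\<Gamma> + {#Conj A B#}) \<sigma>'"
| SDI_conj2: "\<lbrakk>SDI \<Psi> R proj lift d \<sigma> (\<Gamma> + {#B#}) \<sigma>''; SDI \<Psi> R proj lift d \<sigma>'' (\<Gamma> + {#A#}) \<sigma>'\<rbrakk>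
          \<Longrightarrow> SDI \<Psi> R proj lift d \<sigma> (\<Gamma> + {#Conj A B#}) \<sigma>'"
| SDI_ex: "\<lbrakk>is_domain d; DM X \<notin> set d; ctx_of d (\<Gamma> + {#Exists x A#}); \<sigma> \<in> \<Psi> d;
           SDI \<Psi> R proj lift (DM X # d) (lift d X \<sigma>)
              (\<Gamma> + {#subst x (Var (Met X)) A, Exists x A#}) \<sigma>'\<rbrakk>
          \<Longrightarrow> SDI \<Psi> R proj lift d \<sigma> (\<Gamma> + {#Exists x A#}) (proj d X \<sigma>')"
| SDI_all: "\<lbrakk>is_domain d; DE y \<notin> set d; ctx_of d (\<Gamma> + {#Forall x A#}); \<sigma> \<in> \<Psi> d;
           SDI \<Psi> R proj lift (DE y # d) \<sigma> (\<Gamma> + {#subst x (Var (Eig y)) A#}) \<sigma>'\<rbrakk>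
          \<Longrightarrow> SDI \<Psi> R proj lift d \<sigma> (\<Gamma> + {#Forall x A#}) \<sigma>'"

end

theory Submission
  imports Defs
begin

text \<open>Each SDI rule is matched by the corresponding DI
  rule; the constraint produced along the way is the meet of the constraints produced by the
  sub-derivations.  Sequential refinement through a conjunction is parallel composition because
  meets are greatest lower bounds, so (\<sigma> \<and> t1) \<and> t2 \<simeq> \<sigma> \<and> (t1 \<and> t2); at an existential, axiom D2
  moves the projection through the meet with a lifted constraint, and P1 transports P.\<close>

lemma lits_of_ctx_lit: "ctx_of d \<Gamma> \<Longrightarrow> lits_of d (ctx_lit \<Gamma>)"
  unfolding lits_of_def ctx_of_def ctx_lit_def by auto

locale decent_constraints =
  fixes \<Psi> :: "domain \<Rightarrow> 'c set"
    and proj lift :: "domain \<Rightarrow> nat \<Rightarrow> 'c \<Rightarrow> 'c"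
    and meet :: "domain \<Rightarrow> 'c \<Rightarrow> 'c \<Rightarrow> 'c"
    and le :: "domain \<Rightarrow> 'c \<Rightarrow> 'c \<Rightarrow> bool"
    and P :: "domain \<Rightarrow> 'c \<Rightarrow> bool"
  assumes constraint_structure: "constraint_structure \<Psi> proj"
    and meet_structure: "meet_structure \<Psi> meet"
    and lift_structure: "lift_structure \<Psi> lift"
    and decent: "decent \<Psi> proj lift le meet P"
begin

lemma Psi_DE_cons: "is_domain d \<Longrightarrow> DE x \<notin> set d \<Longrightarrow> \<Psi> (DE x # d) = \<Psi> d"
  using constraint_structure unfolding constraint_structure_def by blast

lemma proj_in_Psi: "is_domain d \<Longrightarrow> DM X \<notin> set d \<Longrightarrow> \<sigma> \<in> \<Psi> (DM X # d) \<Longrightarrow> proj d X \<sigma> \<in> \<Psi> d"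
  using constraint_structure unfolding constraint_structure_def by blast

lemma lift_in_Psi: "is_domain d \<Longrightarrow> DM X \<notin> set d \<Longrightarrow> \<sigma> \<in> \<Psi> d \<Longrightarrow> lift d X \<sigma> \<in> \<Psi> (DM X # d)"
  using lift_structure unfolding lift_structure_def by blast

lemma meet_in_Psi: "is_domain d \<Longrightarrow> \<sigma> \<in> \<Psi> d \<Longrightarrow> \<tau> \<in> \<Psi> d \<Longrightarrow> meet d \<sigma> \<tau> \<in> \<Psi> d"
  using meet_structure unfolding meet_structure_def by blast

lemma meet_DE_cons:
  "is_domain d \<Longrightarrow> DE x \<notin> set d \<Longrightarrow> \<sigma> \<in> \<Psi> d \<Longrightarrow> \<tau> \<in> \<Psi> d \<Longrightarrow> meet (DE x # d) \<sigma> \<tau> = meet d \<sigma> \<tau>"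
  using meet_structure unfolding meet_structure_def by blast

lemma constraint_le_refl: "is_domain d \<Longrightarrow> \<sigma> \<in> \<Psi> d \<Longrightarrow> le d \<sigma> \<sigma>"
  using decent unfolding decent_def by meson

lemma constraint_le_trans:
  "\<lbrakk>is_domain d; \<rho> \<in> \<Psi> d; \<sigma> \<in> \<Psi> d; \<tau> \<in> \<Psi> d; le d \<rho> \<sigma>; le d \<sigma> \<tau>\<rbrakk> \<Longrightarrow> le d \<rho> \<tau>"
  using decent unfolding decent_def by meson

lemma le_DE_cons:
  "is_domain d \<Longrightarrow> DE x \<notin> set d \<Longrightarrow> \<sigma> \<in> \<Psi> d \<Longrightarrow> \<tau> \<in> \<Psi> d \<Longrightarrow> le (DE x # d) \<sigma> \<tau> = le d \<sigma> \<tau>"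
  using decent unfolding decent_def by meson

lemma P_DE_cons: "is_domain d \<Longrightarrow> DE x \<notin> set d \<Longrightarrow> \<sigma> \<in> \<Psi> d \<Longrightarrow> P (DE x # d) \<sigma> = P d \<sigma>"
  using decent unfolding decent_def by meson

lemma le_meet_iff:
  assumes "is_domain d" "\<rho> \<in> \<Psi> d" "\<sigma> \<in> \<Psi> d" "\<tau> \<in> \<Psi> d"
  shows "le d \<rho> (meet d \<sigma> \<tau>) \<longleftrightarrow> le d \<rho> \<sigma> \<and> le d \<rho> \<tau>"
proof -
  have lower: "le d (meet d \<sigma> \<tau>) \<sigma>" "le d (meet d \<sigma> \<tau>) \<tau>"
    and greatest: "le d \<rho> \<sigma> \<Longrightarrow> le d \<rho> \<tau> \<Longrightarrow> le d \<rho> (meet d \<sigma> \<tau>)"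
    using decent assms unfolding decent_def by meson+
  have "meet d \<sigma> \<tau> \<in> \<Psi> d"
    using assms by (simp add: meet_in_Psi)
  then show ?thesis
    using constraint_le_trans[OF assms(1,2) _ assms(3)] constraint_le_trans[OF assms(1,2) _ assms(4)]
      lower greatest by blast
qed

lemma proj_simeq_meet_lift:
  "\<lbrakk>is_domain d; DM X \<notin> set d; \<sigma> \<in> \<Psi> d; \<tau> \<in> \<Psi> (DM X # d); \<rho> \<in> \<Psi> (DM X # d);
    simeq le (DM X # d) \<rho> (meet (DM X # d) (lift d X \<sigma>) \<tau>)\<rbrakk>
   \<Longrightarrow> simeq le d (proj d X \<rho>) (meet d \<sigma> (proj d X \<tau>))"
  using decent unfolding decent_def by meson

lemma P_proj_iff:
  "is_domain d \<Longrightarrow> DM X \<notin> set d \<Longrightarrow> \<sigma> \<in> \<Psi> (DM X # d) \<Longrightarrow> P (DM X # d) \<sigma> \<longleftrightarrow> P d (proj d X \<sigma>)"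
  using decent unfolding decent_def by meson

lemma P_mono: "\<lbrakk>is_domain d; \<sigma> \<in> \<Psi> d; \<tau> \<in> \<Psi> d; P d \<sigma>; le d \<sigma> \<tau>\<rbrakk> \<Longrightarrow> P d \<tau>"
  using decent unfolding decent_def by meson

lemma simeq_refl: "is_domain d \<Longrightarrow> \<sigma> \<in> \<Psi> d \<Longrightarrow> simeq le d \<sigma> \<sigma>"
  by (simp add: simeq_def constraint_le_refl)

lemma simeq_trans:
  "\<lbrakk>is_domain d; \<rho> \<in> \<Psi> d; \<sigma> \<in> \<Psi> d; \<tau> \<in> \<Psi> d; simeq le d \<rho> \<sigma>; simeq le d \<sigma> \<tau>\<rbrakk>
   \<Longrightarrow> simeq le d \<rho> \<tau>"
  unfolding simeq_def by (metis constraint_le_trans)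

lemma simeq_iff_same_lower_bounds:
  assumes "is_domain d" "\<sigma> \<in> \<Psi> d" "\<tau> \<in> \<Psi> d"
  shows "simeq le d \<sigma> \<tau> \<longleftrightarrow> (\<forall>\<rho>\<in>\<Psi> d. le d \<rho> \<sigma> \<longleftrightarrow> le d \<rho> \<tau>)"
  unfolding simeq_def using assms constraint_le_refl constraint_le_trans by metis

lemma P_simeq: "\<lbrakk>is_domain d; \<sigma> \<in> \<Psi> d; \<tau> \<in> \<Psi> d; simeq le d \<sigma> \<tau>; P d \<sigma>\<rbrakk> \<Longrightarrow> P d \<tau>"
  unfolding simeq_def using P_mono by blast

lemma meet_regroup_simeq:
  assumes d: "is_domain d" and in_Psi: "\<sigma> \<in> \<Psi> d" "\<sigma>1 \<in> \<Psi> d" "t1 \<in> \<Psi> d" "t2 \<in> \<Psi> d"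
    and \<sigma>1: "simeq le d \<sigma>1 (meet d \<sigma> t1)"
  shows "simeq le d (meet d \<sigma>1 t2) (meet d \<sigma> (meet d t1 t2))"
    and "simeq le d (meet d \<sigma>1 t2) (meet d \<sigma> (meet d t2 t1))"
proof -
  have lower_\<sigma>1: "le d \<rho> \<sigma>1 \<longleftrightarrow> le d \<rho> \<sigma> \<and> le d \<rho> t1" if "\<rho> \<in> \<Psi> d" for \<rho>
    using \<sigma>1 that d in_Psi meet_in_Psi
    by (simp add: simeq_iff_same_lower_bounds le_meet_iff)
  show "simeq le d (meet d \<sigma>1 t2) (meet d \<sigma> (meet d t1 t2))"
    and "simeq le d (meet d \<sigma>1 t2) (meet d \<sigma> (meet d t2 t1))"
    using d in_Psi meet_in_Psi
    by (auto simp: simeq_iff_same_lower_bounds le_meet_iff lower_\<sigma>1)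
qed

lemma refinement_conj:
  assumes d: "is_domain d" and in_Psi: "\<sigma> \<in> \<Psi> d" "\<sigma>1 \<in> \<Psi> d" "\<sigma>' \<in> \<Psi> d" "t1 \<in> \<Psi> d" "t2 \<in> \<Psi> d"
    and first: "simeq le d \<sigma>1 (meet d \<sigma> t1)"
    and second: "simeq le d \<sigma>' (meet d \<sigma>1 t2)" "P d (meet d \<sigma>1 t2)"
  shows "simeq le d \<sigma>' (meet d \<sigma> (meet d t1 t2)) \<and> P d (meet d \<sigma> (meet d t1 t2))"
    and "simeq le d \<sigma>' (meet d \<sigma> (meet d t2 t1)) \<and> P d (meet d \<sigma> (meet d t2 t1))"
  using meet_regroup_simeq[OF d in_Psi(1,2,4,5) first] second d in_Psi meet_in_Psi
  by (meson simeq_trans P_simeq)+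

lemma refinement_exists:
  assumes d: "is_domain d" "DM X \<notin> set d"
    and in_Psi: "\<sigma> \<in> \<Psi> d" "\<sigma>' \<in> \<Psi> (DM X # d)" "t \<in> \<Psi> (DM X # d)"
    and refines: "simeq le (DM X # d) \<sigma>' (meet (DM X # d) (lift d X \<sigma>) t)"
      "P (DM X # d) (meet (DM X # d) (lift d X \<sigma>) t)"
  shows "simeq le d (proj d X \<sigma>') (meet d \<sigma> (proj d X t)) \<and> P d (meet d \<sigma> (proj d X t))"
proof -
  let ?m = "meet (DM X # d) (lift d X \<sigma>) t"
  have dX: "is_domain (DM X # d)"
    using d by (simp add: is_domain_def)
  have m: "?m \<in> \<Psi> (DM X # d)"
    using dX d in_Psi by (simp add: meet_in_Psi lift_in_Psi)
  have "P d (proj d X ?m)"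
    using refines(2) P_proj_iff[OF d m] by simp
  moreover have "simeq le d (proj d X ?m) (meet d \<sigma> (proj d X t))"
    using proj_simeq_meet_lift[OF d in_Psi(1,3) m simeq_refl[OF dX m]] .
  ultimately have "P d (meet d \<sigma> (proj d X t))"
    using d in_Psi m by (meson P_simeq proj_in_Psi meet_in_Psi)
  then show ?thesis
    using proj_simeq_meet_lift[OF d in_Psi(1,3,2) refines(1)] by simp
qed

lemma refinement_forall:
  assumes d: "is_domain d" "DE y \<notin> set d" and in_Psi: "\<sigma> \<in> \<Psi> d" "\<sigma>' \<in> \<Psi> d" "t \<in> \<Psi> d"
    and refines: "simeq le (DE y # d) \<sigma>' (meet (DE y # d) \<sigma> t)" "P (DE y # d) (meet (DE y # d) \<sigma> t)"
  shows "simeq le d \<sigma>' (meet d \<sigma> t) \<and> P d (meet d \<sigma> t)"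
  using refines d in_Psi meet_in_Psi
  by (simp add: meet_DE_cons simeq_def le_DE_cons P_DE_cons)

lemma SDI_wellformed:
  assumes "SDI \<Psi> R proj lift d \<sigma> \<Gamma> \<sigma>'"
  shows "is_domain d \<and> \<sigma> \<in> \<Psi> d \<and> \<sigma>' \<in> \<Psi> d"
  using assms by induction (auto simp: Psi_DE_cons proj_in_Psi)

theorem SDI_imp_DI:
  assumes relates: "relates \<Psi> le meet P models R"
    and "SDI \<Psi> R proj lift d \<sigma> \<Gamma> \<sigma>'"
  shows "\<exists>\<sigma>''\<in>\<Psi> d. simeq le d \<sigma>' (meet d \<sigma> \<sigma>'') \<and> P d (meet d \<sigma> \<sigma>'')
                   \<and> DI \<Psi> models meet proj d \<Gamma> \<sigma>''"
  using assms(2)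
proof induction
  case (SDI_ax d \<Gamma> \<sigma> \<sigma>')
  then show ?case
    using relates lits_of_ctx_lit[OF SDI_ax(2)] DI.DI_ax unfolding relates_def by metis
next
  case (SDI_disj d \<sigma> \<Gamma> A B \<sigma>')
  then obtain t where "t \<in> \<Psi> d" "simeq le d \<sigma>' (meet d \<sigma> t)" "P d (meet d \<sigma> t)"
    and "DI \<Psi> models meet proj d (\<Gamma> + {#A, B#}) t"
    by blast
  moreover from this(4) have "DI \<Psi> models meet proj d (\<Gamma> + {#Disj A B#}) t"
    by (rule DI.DI_disj)
  ultimately show ?case
    by blast
next
  case (SDI_conj1 d \<sigma> \<Gamma> A \<sigma>1 B \<sigma>')
  obtain t1 t2 where t1: "t1 \<in> \<Psi> d" "simeq le d \<sigma>1 (meet d \<sigma> t1)" "DI \<Psi> models meet proj d (\<Gamma> + {#A#}) t1"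
    and t2: "t2 \<in> \<Psi> d" "simeq le d \<sigma>' (meet d \<sigma>1 t2)" "P d (meet d \<sigma>1 t2)"
      "DI \<Psi> models meet proj d (\<Gamma> + {#B#}) t2"
    using SDI_conj1.IH by blast
  have wf: "is_domain d" "\<sigma> \<in> \<Psi> d" "\<sigma>1 \<in> \<Psi> d" "\<sigma>' \<in> \<Psi> d"
    using SDI_wellformed[OF SDI_conj1(1)] SDI_wellformed[OF SDI_conj1(2)] by auto
  show ?case
    using refinement_conj(1)[OF wf t1(1) t2(1) t1(2) t2(2,3)] meet_in_Psi[OF wf(1) t1(1) t2(1)]
      DI.DI_conj[OF t1(3) t2(4)] by blast
next
  case (SDI_conj2 d \<sigma> \<Gamma> B \<sigma>1 A \<sigma>')
  obtain t1 t2 where t1: "t1 \<in> \<Psi> d" "simeq le d \<sigma>1 (meet d \<sigma> t1)" "DI \<Psi> models meet proj d (\<Gamma> + {#B#}) t1"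
    and t2: "t2 \<in> \<Psi> d" "simeq le d \<sigma>' (meet d \<sigma>1 t2)" "P d (meet d \<sigma>1 t2)"
      "DI \<Psi> models meet proj d (\<Gamma> + {#A#}) t2"
    using SDI_conj2.IH by blast
  have wf: "is_domain d" "\<sigma> \<in> \<Psi> d" "\<sigma>1 \<in> \<Psi> d" "\<sigma>' \<in> \<Psi> d"
    using SDI_wellformed[OF SDI_conj2(1)] SDI_wellformed[OF SDI_conj2(2)] by auto
  show ?case
    using refinement_conj(2)[OF wf t1(1) t2(1) t1(2) t2(2,3)] meet_in_Psi[OF wf(1) t2(1) t1(1)]
      DI.DI_conj[OF t2(4) t1(3)] by blast
next
  case (SDI_ex d X \<Gamma> x A \<sigma> \<sigma>')
  then obtain t where t: "t \<in> \<Psi> (DM X # d)"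
      "simeq le (DM X # d) \<sigma>' (meet (DM X # d) (lift d X \<sigma>) t)"
      "P (DM X # d) (meet (DM X # d) (lift d X \<sigma>) t)"
      "DI \<Psi> models meet proj (DM X # d) (\<Gamma> + {#subst x (Var (Met X)) A, Exists x A#}) t"
    by blast
  have "\<sigma>' \<in> \<Psi> (DM X # d)"
    using SDI_wellformed[OF SDI_ex(5)] by blast
  then show ?case
    using refinement_exists[OF SDI_ex(1,2,4) _ t(1-3)] proj_in_Psi[OF SDI_ex(1,2) t(1)]
      DI.DI_ex[OF SDI_ex(1-3) t(4)] by blast
next
  case (SDI_all d y \<Gamma> x A \<sigma> \<sigma>')
  have \<Psi>_eq: "\<Psi> (DE y # d) = \<Psi> d"
    using Psi_DE_cons[OF SDI_all(1,2)] .
  then obtain t where t: "t \<in> \<Psi> d"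
      "simeq le (DE y # d) \<sigma>' (meet (DE y # d) \<sigma> t)" "P (DE y # d) (meet (DE y # d) \<sigma> t)"
      "DI \<Psi> models meet proj (DE y # d) (\<Gamma> + {#subst x (Var (Eig y)) A#}) t"
    using SDI_all.IH by blast
  have "\<sigma>' \<in> \<Psi> d"
    using SDI_wellformed[OF SDI_all(5)] \<Psi>_eq by blast
  then show ?case
    using refinement_forall[OF SDI_all(1,2,4) _ t(1-3)] t(1) DI.DI_all[OF SDI_all(1-3) t(4)] by blast
qed

end

theorem mainTheorem5:
  fixes \<Psi> :: "domain \<Rightarrow> 'c set"
    and proj lift :: "domain \<Rightarrow> nat \<Rightarrow> 'c \<Rightarrow> 'c"
    and meet :: "domain \<Rightarrow> 'c \<Rightarrow> 'c \<Rightarrow> 'c"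
    and le :: "domain \<Rightarrow> 'c \<Rightarrow> 'c \<Rightarrow> bool"
    and P :: "domain \<Rightarrow> 'c \<Rightarrow> bool"
    and models :: "domain \<Rightarrow> ('f, 'p) fm set \<Rightarrow> 'c \<Rightarrow> bool"
    and R :: "domain \<Rightarrow> 'c \<Rightarrow> ('f, 'p) fm set \<Rightarrow> 'c \<Rightarrow> bool"
  assumes "constraint_structure \<Psi> proj"
    and "meet_structure \<Psi> meet"
    and "lift_structure \<Psi> lift"
    and "decent \<Psi> proj lift le meet P"
    and "relates \<Psi> le meet P models R"
    and "SDI \<Psi> R proj lift d \<sigma> \<Gamma> \<sigma>'"
  shows "\<exists>\<sigma>''\<in>\<Psi> d. simeq le d \<sigma>' (meet d \<sigma> \<sigma>'') \<and> P d (meet d \<sigma> \<sigma>'')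
                   \<and> DI \<Psi> models meet proj d \<Gamma> \<sigma>''"
proof -
  interpret decent_constraints \<Psi> proj lift meet le P
    using assms(1-4) by unfold_locales
  show ?thesis
    using SDI_imp_DI[OF assms(5,6)] .
qed

end
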